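(* For every $x=(x_1^\top,\dots,x_m^\top)^\top\in\mathbb R^d$ with $x_i\in\mathbb R^{\bar d}$, $$\max\Big\{\|Hx\|,\ \min_{\gamma}\|\nabla f_0(x)+H^\top\gamma\|\Big\}\ \ge\ \frac{\sqrt m}{2}\Big\|\frac1m\sum_{i=1}^m\nabla f_i(\bar x)\Big\|,\qquad\text{where }\bar x=\frac1m\sum_{i=1}^mx_i.$$
   Context: Fix $\epsilon\in(0,1)$, $L_f>0$, integers $m_1\ge2$, $m_2\ge1$ with $m_1m_2$ even, $m=3m_1m_2$, an odd integer $\bar d\ge5$, $d=m\bar d$; $[z]_j$ is the $j$-th coordinate. $J_p\in\mathbb R^{(p-1)\times p}$ has $-1$ at $(k,k)$, $1$ at $(k,k+1)$, zero elsewhere; $H=mL_f(J_m\otimes I_{\bar d})$. $\Psi(u)=0$ ($u\le0$), $1-e^{-u^2}$ ($u>0$); $\Phi(v)=4\arctan v+2\pi$. For $z\in\mathbb R^{\bar d}$: $\varphi(z,1)=-\Psi(1)\Phi([z]_1)$, $\varphi(z,j)=\Psi(-[z]_{j-1})\Phi(-[z]_j)-\Psi([z]_{j-1})\Phi([z]_j)$ ($2\le j\le\bar d$); $h_i(z)=\varphi(z,1)+3\sum_{j=1}^{\lfloor\bar d/2\rfloor}\varphi(z,2j)$ for $1\le i\le m/3$, $h_i(z)=\varphi(z,1)$ for $m/3+1\le i\le 2m/3$, $h_i(z)=\varphi(z,1)+3\sum_{j=1}^{\lfloor\bar d/2\rfloor}\varphi(z,2j+1)$ for $2m/3+1\le i\le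 m$. $f_i(z)=\frac{300\pi\epsilon^2}{mL_f}h_i(\frac{\sqrt mL_fz}{150\pi\epsilon})$, $f_0(x)=\sum_{i=1}^mf_i(x_i)$. *)

theory Defs
  imports "HOL-Analysis.Analysis"
begin

text \<open>Vectors in R^n are represented as functions nat => real, coordinates 1..n.
  Matrices as functions nat => nat => real, entries (row, column), 1-indexed.\<close>

definition enorm :: "nat \<Rightarrow> (nat \<Rightarrow> real) \<Rightarrow> real" where
  "enorm n v = sqrt (\<Sum>j=1..n. (v j)\<^sup>2)"

definition matvec :: "(nat \<Rightarrow> nat \<Rightarrow> real) \<Rightarrow> nat \<Rightarrow> (nat \<Rightarrow> real) \<Rightarrow> (nat \<Rightarrow> real)" where
  "matvec A ncols v = (\<lambda>r. \<Sum>c=1..ncols. A r c * v c)"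

definition matTvec :: "(nat \<Rightarrow> nat \<Rightarrow> real) \<Rightarrow> nat \<Rightarrow> (nat \<Rightarrow> real) \<Rightarrow> (nat \<Rightarrow> real)" where
  "matTvec A nrows v = (\<lambda>c. \<Sum>r=1..nrows. A r c * v r)"

definition Jmat :: "nat \<Rightarrow> nat \<Rightarrow> nat \<Rightarrow> real" where
  "Jmat p k l = (if 1 \<le> k \<and> k \<le> p - 1 \<and> 1 \<le> l \<and> l \<le> p then
       (if l = k then -1 else if l = k + 1 then 1 else 0) else 0)"

text \<open>Kronecker product A \<otimes> I_n (1-indexed).\<close>
definition kron_id :: "(nat \<Rightarrow> nat \<Rightarrow> real) \<Rightarrow> nat \<Rightarrow> nat \<Rightarrow> nat \<Rightarrow> real" where
  "kron_id A n r c = (if 1 \<le> r \<and> 1 \<le> c then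
      A ((r - 1) div n + 1) ((c - 1) div n + 1) *
      (if (r - 1) mod n = (c - 1) mod n then 1 else 0) else 0)"

definition Hmat :: "nat \<Rightarrow> real \<Rightarrow> nat \<Rightarrow> nat \<Rightarrow> nat \<Rightarrow> real" where
  "Hmat m Lf dbar r c = real m * Lf * kron_id (Jmat m) dbar r c"

definition Psi :: "real \<Rightarrow> real" where
  "Psi u = (if u \<le> 0 then 0 else 1 - exp (- (u\<^sup>2)))"

definition Phi :: "real \<Rightarrow> real" where
  "Phi v = 4 * arctan v + 2 * pi"

definition varphi :: "(nat \<Rightarrow> real) \<Rightarrow> nat \<Rightarrow> real" where
  "varphi z j = (if j = 1 then - Psi 1 * Phi (z 1)
     else Psi (- z (j - 1)) * Phi (- z j) - Psi (z (j - 1)) * Phi (z j))"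

definition hfun :: "nat \<Rightarrow> nat \<Rightarrow> nat \<Rightarrow> (nat \<Rightarrow> real) \<Rightarrow> real" where
  "hfun m dbar i z =
     (if 1 \<le> i \<and> 3 * i \<le> m then varphi z 1 + 3 * (\<Sum>j=1..dbar div 2. varphi z (2 * j))
      else if 3 * i \<le> 2 * m then varphi z 1
      else varphi z 1 + 3 * (\<Sum>j=1..dbar div 2. varphi z (2 * j + 1)))"

definition ffun :: "real \<Rightarrow> real \<Rightarrow> nat \<Rightarrow> nat \<Rightarrow> nat \<Rightarrow> (nat \<Rightarrow> real) \<Rightarrow> real" where
  "ffun eps Lf m dbar i z = 300 * pi * eps\<^sup>2 / (real m * Lf) *
     hfun m dbar i (\<lambda>j. sqrt (real m) * Lf * z j / (150 * pi * eps))"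

definition blk :: "nat \<Rightarrow> (nat \<Rightarrow> real) \<Rightarrow> nat \<Rightarrow> (nat \<Rightarrow> real)" where
  "blk dbar x i = (\<lambda>j. x ((i - 1) * dbar + j))"

definition f0 :: "real \<Rightarrow> real \<Rightarrow> nat \<Rightarrow> nat \<Rightarrow> (nat \<Rightarrow> real) \<Rightarrow> real" where
  "f0 eps Lf m dbar x = (\<Sum>i=1..m. ffun eps Lf m dbar i (blk dbar x i))"

definition xbar :: "nat \<Rightarrow> nat \<Rightarrow> (nat \<Rightarrow> real) \<Rightarrow> (nat \<Rightarrow> real)" where
  "xbar m dbar x = (\<lambda>j. (1 / real m) * (\<Sum>i=1..m. blk dbar x i j))"

definition grad :: "nat \<Rightarrow> ((nat \<Rightarrow> real) \<Rightarrow> real) \<Rightarrow> (nat \<Rightarrow> real) \<Rightarrow> (nat \<Rightarrow> real)" where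
  "grad n g z = (\<lambda>j. if 1 \<le> j \<and> j \<le> n then deriv (\<lambda>t. g (z(j := t))) (z j) else 0)"

end

theory Submission
  imports Defs
begin

(* Write X_i for the blocks of x and T = sum_p |X_(p+1) - X_p|.  Every block column
   of H^T sums to zero, so for each gamma the block mean of grad f_0(x) + H^T gamma is
   the mean of the grad f_i(X_i), and Cauchy-Schwarz over the m blocks bounds the
   infimum below by sqrt m times the norm of that mean.  Each grad f_i is
   Lf-Lipschitz and telescoping gives |xbar - X_i| <= T, so the mean of the
   grad f_i(xbar) is within Lf T of the mean of the grad f_i(X_i).  Finally
   sqrt m Lf T <= m Lf (sum_p |X_(p+1) - X_p|^2)^(1/2) = |H x|, hence
   sqrt m |mean_i grad f_i(xbar)| <= |H x| + inf_gamma |grad f_0(x) + H^T gamma|. *)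

lemma lipschitz_of_derivative_bound:
  fixes f f' :: "real \<Rightarrow> real"
  assumes "\<And>x. (f has_real_derivative f' x) (at x)" and "\<And>x. \<bar>f' x\<bar> \<le> B"
  shows "\<bar>f u - f v\<bar> \<le> B * \<bar>u - v\<bar>"
  using field_differentiable_bound[of UNIV f f' B u v] assms by simp

lemma exp_ge_two_mult_sub_one:
  fixes t :: real
  assumes "0 \<le> t"
  shows "2 * t - 1 \<le> exp t"
proof -
  have "(1 + t / 2)\<^sup>2 \<le> (exp (t / 2))\<^sup>2"
    using assms exp_ge_add_one_self[of "t / 2"] by (intro power_mono) auto
  moreover have "2 * t - 1 \<le> (1 + t / 2)\<^sup>2"
    using sum_squares_ge_zero[of "t - 2" 0] by (simp add: power2_eq_square algebra_simps)
  ultimately show ?thesis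
    by (simp add: power2_eq_square flip: exp_add)
qed

lemma abs_mult_diff_le:
  fixes a b a' b' :: real
  assumes "\<bar>a'\<bar> \<le> Ma" "\<bar>b\<bar> \<le> Mb"
  shows "\<bar>a * b - a' * b'\<bar> \<le> Mb * \<bar>a - a'\<bar> + Ma * \<bar>b - b'\<bar>"
proof -
  have "\<bar>a * b - a' * b'\<bar> = \<bar>(a - a') * b + a' * (b - b')\<bar>"
    by (simp add: algebra_simps)
  also have "\<dots> \<le> \<bar>a - a'\<bar> * \<bar>b\<bar> + \<bar>a'\<bar> * \<bar>b - b'\<bar>"
    by (metis abs_mult abs_triangle_ineq)
  also have "\<dots> \<le> \<bar>a - a'\<bar> * Mb + Ma * \<bar>b - b'\<bar>"
    using assms by (intro add_mono mult_mono) auto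
  finally show ?thesis
    by (simp add: mult.commute)
qed

lemma sum_odd_interval_split:
  "(\<Sum>j=1..2 * N + 1. F j) = F 1 + (\<Sum>j=1..N. F (2 * j)) + (\<Sum>j=1..N. F (2 * j + 1))"
  for F :: "nat \<Rightarrow> 'a::comm_monoid_add"
  by (induction N) (simp_all add: sum.cl_ivl_Suc ac_simps)

lemma sum_blocks:
  fixes F :: "nat \<Rightarrow> 'a::comm_monoid_add"
  shows "(\<Sum>r=1..a * n. F r) = (\<Sum>p=1..a. \<Sum>q=1..n. F ((p - 1) * n + q))"
proof (induction a)
  case (Suc a)
  have "(\<Sum>r=1..a * n + n. F r) = (\<Sum>r=1..a * n. F r) + (\<Sum>r=a * n + 1..a * n + n. F r)"
    by (rule sum.ub_add_nat) simp
  also have "(\<Sum>r=a * n + 1..a * n + n. F r) = (\<Sum>q=1..n. F (a * n + q))"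
    using sum.shift_bounds_cl_nat_ivl[of F 1 "a * n" n] by (simp add: add.commute)
  finally show ?case
    using Suc by (simp add: sum.cl_ivl_Suc add.commute)
qed simp

lemma L2_set_sum_le:
  assumes "finite P"
  shows "L2_set (\<lambda>k. \<Sum>p\<in>P. f p k) A \<le> (\<Sum>p\<in>P. L2_set (f p) A)"
  using assms
proof (induction P rule: finite_induct)
  case (insert p P)
  then have "L2_set (\<lambda>k. \<Sum>p\<in>insert p P. f p k) A \<le> L2_set (f p) A + L2_set (\<lambda>k. \<Sum>p\<in>P. f p k) A"
    by (simp add: L2_set_triangle_ineq)
  with insert show ?case
    by simp
qed (simp add: L2_set_def)

lemma sum_le_sqrt_card_mult_L2_set: "(\<Sum>i\<in>A. f i) \<le> sqrt (card A) * L2_set f A"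
proof -
  have "(\<Sum>i\<in>A. f i)\<^sup>2 \<le> (sqrt (card A) * L2_set f A)\<^sup>2"
    using sum_squared_le_sum_of_squares[of f A]
    by (simp add: L2_set_def power_mult_distrib sum_nonneg mult.commute)
  then show ?thesis
    by (rule power2_le_imp_le) simp
qed

lemma sqrt_mult_sum_le_L2_set: "sqrt (real m) * (\<Sum>p=1..m - 1. f p) \<le> real m * L2_set f {1..m - 1}"
proof -
  have "(\<Sum>p=1..m - 1. f p) \<le> sqrt (card {1..m - 1}) * L2_set f {1..m - 1}"
    by (rule sum_le_sqrt_card_mult_L2_set)
  also have "\<dots> \<le> sqrt (real m) * L2_set f {1..m - 1}"
    by (intro mult_right_mono) auto
  finally have "sqrt (real m) * (\<Sum>p=1..m - 1. f p) \<le> sqrt (real m) * (sqrt (real m) * L2_set f {1..m - 1})"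
    by (intro mult_left_mono) simp_all
  then show ?thesis
    by (simp add: mult.assoc [symmetric])
qed

lemma L2_set_shift_down_le:
  fixes f :: "nat \<Rightarrow> real"
  assumes "f 0 = 0"
  shows "L2_set (\<lambda>k. f (k - 1)) {1..n} \<le> L2_set f {1..n}"
proof -
  have shift: "(\<Sum>k=1..n. (f (k - 1))\<^sup>2) + (f n)\<^sup>2 = (\<Sum>k=1..n. (f k)\<^sup>2)"
    using assms by (induction n) (simp_all add: sum.cl_ivl_Suc)
  show ?thesis
    unfolding L2_set_def using shift zero_le_power2[of "f n"] by (intro real_sqrt_le_mono) linarith
qed

lemma L2_set_shift_up_le:
  fixes f :: "nat \<Rightarrow> real"
  assumes "f (n + 1) = 0"
  shows "L2_set (\<lambda>k. f (k + 1)) {1..n} \<le> L2_set f {1..n}"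
proof -
  have shift: "(\<Sum>k=1..n. (f (k + 1))\<^sup>2) + (f 1)\<^sup>2 = (\<Sum>k=1..n. (f k)\<^sup>2) + (f (n + 1))\<^sup>2" for n
    by (induction n) (simp_all add: sum.cl_ivl_Suc)
  then have "(\<Sum>k=1..n. (f (k + 1))\<^sup>2) + (f 1)\<^sup>2 = (\<Sum>k=1..n. (f k)\<^sup>2)"
    using assms by simp
  then show ?thesis
    unfolding L2_set_def using zero_le_power2[of "f 1"] by (intro real_sqrt_le_mono) linarith
qed

lemma L2_set_telescope_le:
  fixes X :: "nat \<Rightarrow> nat \<Rightarrow> real"
  assumes "i \<in> {1..m}" "j \<in> {1..m}"
  shows "L2_set (\<lambda>k. X j k - X i k) A \<le> (\<Sum>p=1..m - 1. L2_set (\<lambda>k. X (p + 1) k - X p k) A)"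
proof -
  have ordered: "L2_set (\<lambda>k. X b k - X a k) A \<le> (\<Sum>p=1..m - 1. L2_set (\<lambda>k. X (p + 1) k - X p k) A)"
    if "1 \<le> a" "a \<le> b" "b \<le> m" for a b
  proof -
    have "(\<lambda>k. X b k - X a k) = (\<lambda>k. \<Sum>p\<in>{a..<b}. X (p + 1) k - X p k)"
      using sum_Suc_diff'[OF \<open>a \<le> b\<close>, of "\<lambda>p. X p _"] by simp
    then have "L2_set (\<lambda>k. X b k - X a k) A \<le> (\<Sum>p\<in>{a..<b}. L2_set (\<lambda>k. X (p + 1) k - X p k) A)"
      using L2_set_sum_le[of "{a..<b}" "\<lambda>p k. X (p + 1) k - X p k" A] by simp
    also have "\<dots> \<le> (\<Sum>p=1..m - 1. L2_set (\<lambda>k. X (p + 1) k - X p k) A)"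
      using that by (intro sum_mono2) auto
    finally show ?thesis .
  qed
  have "L2_set (\<lambda>k. X j k - X i k) A = L2_set (\<lambda>k. X i k - X j k) A"
    by (simp add: L2_set_def power2_commute)
  then show ?thesis
    using ordered[of i j] ordered[of j i] assms by (cases "i \<le> j") simp_all
qed

lemma L2_set_mean_sub_le:
  fixes X :: "nat \<Rightarrow> nat \<Rightarrow> real"
  assumes "i \<in> {1..m}"
  shows "L2_set (\<lambda>k. (1 / real m) * (\<Sum>j=1..m. X j k) - X i k) A
           \<le> (\<Sum>p=1..m - 1. L2_set (\<lambda>k. X (p + 1) k - X p k) A)"
proof -
  have m_pos: "0 < real m"
    using assms by simp
  have "L2_set (\<lambda>k. (1 / real m) * (\<Sum>j=1..m. X j k) - X i k) A
      = L2_set (\<lambda>k. (1 / real m) * (\<Sum>j=1..m. X j k - X i k)) A"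
    using m_pos by (intro L2_set_cong) (simp_all add: sum_subtractf right_diff_distrib)
  also have "\<dots> = (1 / real m) * L2_set (\<lambda>k. \<Sum>j=1..m. X j k - X i k) A"
    by (rule L2_set_right_distrib[symmetric]) simp
  also have "\<dots> \<le> (1 / real m) * (\<Sum>j=1..m. L2_set (\<lambda>k. X j k - X i k) A)"
    by (intro mult_left_mono L2_set_sum_le) simp_all
  also have "\<dots> \<le> (1 / real m) * (\<Sum>j=1..m. \<Sum>p=1..m - 1. L2_set (\<lambda>k. X (p + 1) k - X p k) A)"
    using assms by (intro mult_left_mono sum_mono L2_set_telescope_le) simp_all
  also have "\<dots> = (\<Sum>p=1..m - 1. L2_set (\<lambda>k. X (p + 1) k - X p k) A)"
    using m_pos by simp
  finally show ?thesis .
qed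

lemma L2_set_mean_lipschitz_le:
  fixes F :: "nat \<Rightarrow> (nat \<Rightarrow> real) \<Rightarrow> nat \<Rightarrow> real" and X :: "nat \<Rightarrow> nat \<Rightarrow> real"
  assumes lipschitz: "\<And>i. i \<in> {1..m} \<Longrightarrow>
      L2_set (\<lambda>k. F i y k - F i (X i) k) A \<le> L * L2_set (\<lambda>k. y k - X i k) A"
    and near: "\<And>i. i \<in> {1..m} \<Longrightarrow> L2_set (\<lambda>k. y k - X i k) A \<le> T"
    and "0 < m" "0 \<le> L"
  shows "L2_set (\<lambda>k. (1 / real m) * (\<Sum>i=1..m. F i y k)) A
           \<le> L2_set (\<lambda>k. (1 / real m) * (\<Sum>i=1..m. F i (X i) k)) A + L * T"
proof -
  have each: "L2_set (\<lambda>k. F i y k - F i (X i) k) A \<le> L * T" if "i \<in> {1..m}" for i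
    using lipschitz[OF that] mult_left_mono[OF near[OF that] \<open>0 \<le> L\<close>] by linarith
  have "(\<lambda>k. (1 / real m) * (\<Sum>i=1..m. F i y k))
      = (\<lambda>k. (1 / real m) * (\<Sum>i=1..m. F i (X i) k) + (1 / real m) * (\<Sum>i=1..m. F i y k - F i (X i) k))"
    by (simp add: sum_subtractf algebra_simps)
  then have "L2_set (\<lambda>k. (1 / real m) * (\<Sum>i=1..m. F i y k)) A
      \<le> L2_set (\<lambda>k. (1 / real m) * (\<Sum>i=1..m. F i (X i) k)) A
        + L2_set (\<lambda>k. (1 / real m) * (\<Sum>i=1..m. F i y k - F i (X i) k)) A"
    by (simp only: L2_set_triangle_ineq)
  also have "L2_set (\<lambda>k. (1 / real m) * (\<Sum>i=1..m. F i y k - F i (X i) k)) A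
      = (1 / real m) * L2_set (\<lambda>k. \<Sum>i=1..m. F i y k - F i (X i) k) A"
    by (rule L2_set_right_distrib[symmetric]) simp
  also have "\<dots> \<le> (1 / real m) * (\<Sum>i=1..m. L2_set (\<lambda>k. F i y k - F i (X i) k) A)"
    by (intro mult_left_mono L2_set_sum_le) simp_all
  also have "\<dots> \<le> (1 / real m) * (\<Sum>i=1..m. L * T)"
    using each by (intro mult_left_mono sum_mono) simp_all
  also have "\<dots> = L * T"
    using \<open>0 < m\<close> by simp
  finally show ?thesis
    by simp
qed

lemma sqrt_mult_L2_set_block_mean_le:
  fixes w :: "nat \<Rightarrow> real"
  shows "sqrt (real m) * L2_set (\<lambda>k. (1 / real m) * (\<Sum>i=1..m. w ((i - 1) * n + k))) {1..n}
           \<le> L2_set w {1..m * n}"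
proof (rule power2_le_imp_le)
  have block: "(\<Sum>i=1..m. w ((i - 1) * n + k))\<^sup>2 / real m \<le> (\<Sum>i=1..m. (w ((i - 1) * n + k))\<^sup>2)" for k
    using sum_squared_le_sum_of_squares[of "\<lambda>i. w ((i - 1) * n + k)" "{1..m}"]
    by (cases "m = 0") (simp_all add: divide_le_eq)
  have "(sqrt (real m) * L2_set (\<lambda>k. (1 / real m) * (\<Sum>i=1..m. w ((i - 1) * n + k))) {1..n})\<^sup>2
      = real m * (\<Sum>k=1..n. ((1 / real m) * (\<Sum>i=1..m. w ((i - 1) * n + k)))\<^sup>2)"
    by (simp add: L2_set_def power_mult_distrib sum_nonneg)
  also have "\<dots> = (\<Sum>k=1..n. (\<Sum>i=1..m. w ((i - 1) * n + k))\<^sup>2 / real m)"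
  proof -
    have "real m * ((1 / real m) * a)\<^sup>2 = a\<^sup>2 / real m" for a
      by (cases "m = 0") (simp_all add: power2_eq_square)
    then show ?thesis
      by (simp only: sum_distrib_left[of "real m"])
  qed
  also have "\<dots> \<le> (\<Sum>k=1..n. \<Sum>i=1..m. (w ((i - 1) * n + k))\<^sup>2)"
    by (intro sum_mono block)
  also have "\<dots> = (\<Sum>i=1..m. \<Sum>k=1..n. (w ((i - 1) * n + k))\<^sup>2)"
    by (rule sum.swap)
  also have "\<dots> = (\<Sum>r=1..m * n. (w r)\<^sup>2)"
    by (rule sum_blocks[symmetric])
  also have "\<dots> = (L2_set w {1..m * n})\<^sup>2"
    by (simp add: L2_set_def sum_nonneg)
  finally show "(sqrt (real m) * L2_set (\<lambda>k. (1 / real m) * (\<Sum>i=1..m. w ((i - 1) * n + k))) {1..n})\<^sup>2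
      \<le> (L2_set w {1..m * n})\<^sup>2" .
qed simp

lemma enorm_eq_L2_set: "enorm n v = L2_set v {1..n}"
  by (simp add: enorm_def L2_set_def)

section \<open>The profiles Psi and Phi\<close>

definition dPsi :: "real \<Rightarrow> real" where
  "dPsi u = (if u \<le> 0 then 0 else 2 * u * exp (- (u\<^sup>2)))"

definition dPhi :: "real \<Rightarrow> real" where
  "dPhi v = 4 / (1 + v\<^sup>2)"

lemma Psi_has_real_derivative: "(Psi has_real_derivative dPsi u) (at u)"
proof -
  have "((\<lambda>v. if v \<in> {..0} then 0 else 1 - exp (- v\<^sup>2)) has_vector_derivative
          (if u \<in> {..0} then 0 else 2 * u * exp (- u\<^sup>2))) (at u within UNIV)"
    by (rule has_vector_derivative_If_within_closures[where T = "{0<..}"])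
       (auto intro!: derivative_eq_intros
             simp: has_real_derivative_iff_has_vector_derivative[symmetric])
  then show ?thesis
    by (simp add: has_real_derivative_iff_has_vector_derivative Psi_def[abs_def] dPsi_def)
qed

lemma Phi_has_real_derivative: "(Phi has_real_derivative dPhi v) (at v)"
  unfolding Phi_def[abs_def] dPhi_def
  by (auto intro!: derivative_eq_intros simp: field_simps)

lemma Psi_has_real_derivative_chain [derivative_intros]:
  "(g has_real_derivative D) (at x within S) \<Longrightarrow>
     ((\<lambda>x. Psi (g x)) has_real_derivative dPsi (g x) * D) (at x within S)"
  by (rule DERIV_chain2[OF Psi_has_real_derivative])

lemma Phi_has_real_derivative_chain [derivative_intros]:
  "(g has_real_derivative D) (at x within S) \<Longrightarrow>
     ((\<lambda>x. Phi (g x)) has_real_derivative dPhi (g x) * D) (at x within S)"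
  by (rule DERIV_chain2[OF Phi_has_real_derivative])

lemma Psi_nonneg: "0 \<le> Psi u" and Psi_le_one: "Psi u \<le> 1"
  by (simp_all add: Psi_def)

lemma Phi_nonneg: "0 \<le> Phi v" and Phi_le: "Phi v \<le> 4 * pi"
  using arctan_bounded[of v] by (simp_all add: Phi_def)

lemma dPsi_nonneg: "0 \<le> dPsi u"
  by (simp add: dPsi_def)

lemma dPsi_le_one: "dPsi u \<le> 1"
proof (cases "u \<le> 0")
  case False
  have "2 * u \<le> 1 + u\<^sup>2"
    using sum_squares_ge_zero[of "u - 1" 0] by (simp add: power2_eq_square algebra_simps)
  also have "\<dots> \<le> exp (u\<^sup>2)"
    by (rule exp_ge_add_one_self)
  finally show ?thesis
    using False by (simp add: dPsi_def exp_minus field_simps)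
qed (simp add: dPsi_def)

lemma dPhi_nonneg: "0 \<le> dPhi v" and dPhi_le: "dPhi v \<le> 4"
  by (simp_all add: dPhi_def add_pos_nonneg divide_le_eq)

lemma Psi_lipschitz: "\<bar>Psi u - Psi v\<bar> \<le> \<bar>u - v\<bar>"
  using lipschitz_of_derivative_bound[OF Psi_has_real_derivative, of 1 u v] dPsi_nonneg dPsi_le_one
  by simp

lemma Phi_lipschitz: "\<bar>Phi u - Phi v\<bar> \<le> 4 * \<bar>u - v\<bar>"
  using lipschitz_of_derivative_bound[OF Phi_has_real_derivative, of 4 u v] dPhi_nonneg dPhi_le
  by simp

lemma dPsi_lipschitz: "\<bar>dPsi u - dPsi v\<bar> \<le> 2 * \<bar>u - v\<bar>"
proof -
  define g where "g x = 2 * x * exp (- (x\<^sup>2))" for x :: real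
  have g_deriv: "(g has_real_derivative (2 - 4 * x\<^sup>2) * exp (- (x\<^sup>2))) (at x)" for x
    unfolding g_def by (auto intro!: derivative_eq_intros simp: algebra_simps power2_eq_square)
  have "\<bar>2 - 4 * x\<^sup>2\<bar> \<le> 2 * exp (x\<^sup>2)" for x :: real
    using exp_ge_two_mult_sub_one[of "x\<^sup>2"] exp_ge_add_one_self[of "x\<^sup>2"] zero_le_power2[of x]
    unfolding abs_le_iff by linarith
  then have "\<bar>(2 - 4 * x\<^sup>2) * exp (- (x\<^sup>2))\<bar> \<le> 2" for x :: real
    by (simp add: abs_mult exp_minus divide_le_eq flip: divide_inverse)
  then have "\<bar>g a - g b\<bar> \<le> 2 * \<bar>a - b\<bar>" for a b
    by (rule lipschitz_of_derivative_bound[OF g_deriv])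
  moreover have "dPsi w = g (max w 0)" for w
    by (simp add: dPsi_def g_def)
  moreover have "\<bar>max u 0 - max v 0\<bar> \<le> \<bar>u - v\<bar>"
    by (simp add: max_def)
  ultimately show ?thesis
    by (metis mult_left_mono order_trans zero_le_numeral)
qed

lemma dPhi_lipschitz: "\<bar>dPhi u - dPhi v\<bar> \<le> 3 * \<bar>u - v\<bar>"
proof (rule lipschitz_of_derivative_bound)
  fix x :: real
  have pos: "0 < 1 + x\<^sup>2"
    by (simp add: add_pos_nonneg)
  then show "(dPhi has_real_derivative - 8 * x / (1 + x\<^sup>2)\<^sup>2) (at x)"
    unfolding dPhi_def[abs_def]
    by (auto intro!: derivative_eq_intros simp: field_simps power2_eq_square)
  have "8 * \<bar>x\<bar> \<le> 3 + 6 * x\<^sup>2"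
    using sum_squares_ge_zero[of "3 * \<bar>x\<bar> - 2" 0] by (simp add: power2_eq_square algebra_simps)
  also have "\<dots> \<le> 3 * (1 + x\<^sup>2)\<^sup>2"
    using zero_le_power2[of "x\<^sup>2"] by (simp add: power2_eq_square algebra_simps)
  finally show "\<bar>- 8 * x / (1 + x\<^sup>2)\<^sup>2\<bar> \<le> 3"
    using pos by (simp add: abs_mult divide_le_eq)
qed

section \<open>The gradients of the h_i\<close>

definition dvarphi_diag :: "(nat \<Rightarrow> real) \<Rightarrow> nat \<Rightarrow> real" where
  "dvarphi_diag z j = (if j = 1 then - Psi 1 * dPhi (z 1)
     else - Psi (- z (j - 1)) * dPhi (- z j) - Psi (z (j - 1)) * dPhi (z j))"

definition dvarphi_prev :: "(nat \<Rightarrow> real) \<Rightarrow> nat \<Rightarrow> real" where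
  "dvarphi_prev z j = - dPsi (- z (j - 1)) * Phi (- z j) - dPsi (z (j - 1)) * Phi (z j)"

lemma fun_upd_has_real_derivative [derivative_intros]:
  "((\<lambda>t. (z(k := t)) l) has_real_derivative (if l = k then 1 else 0)) (at s)"
  by (cases "l = k") auto

lemma varphi_partial_deriv:
  assumes "1 \<le> j"
  shows "((\<lambda>t. varphi (z(k := t)) j) has_real_derivative
           (if k = j then dvarphi_diag z j else if 2 \<le> j \<and> k = j - 1 then dvarphi_prev z j else 0))
         (at (z k))"
proof (cases "j = 1")
  case True
  then show ?thesis
    by (auto intro!: derivative_eq_intros simp: varphi_def dvarphi_diag_def)
next
  case False
  with assms have "j - 1 \<noteq> j"
    by simp
  with False assms show ?thesis
    by (auto intro!: derivative_eq_intros simp: varphi_def dvarphi_diag_def dvarphi_prev_def)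
qed

definition hweight :: "nat \<Rightarrow> nat \<Rightarrow> nat \<Rightarrow> real" where
  "hweight m i j = (if j = 1 then 1
     else if 1 \<le> i \<and> 3 * i \<le> m then (if even j then 3 else 0)
     else if 3 * i \<le> 2 * m then 0
     else (if odd j then 3 else 0))"

lemma hweight_nonneg: "0 \<le> hweight m i j" and hweight_le: "hweight m i j \<le> 3"
  by (simp_all add: hweight_def)

lemma hfun_eq_weighted_sum:
  assumes "odd n"
  shows "hfun m n i z = (\<Sum>j=1..n. hweight m i j * varphi z j)"
proof -
  obtain N where n: "n = 2 * N + 1"
    using assms oddE by blast
  show ?thesis
    unfolding n sum_odd_interval_split
    by (cases "1 \<le> i \<and> 3 * i \<le> m"; cases "3 * i \<le> 2 * m")
       (auto simp: hfun_def hweight_def sum_distrib_left)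
qed

definition dhfun :: "nat \<Rightarrow> nat \<Rightarrow> nat \<Rightarrow> (nat \<Rightarrow> real) \<Rightarrow> nat \<Rightarrow> real" where
  "dhfun m n i z k = hweight m i k * dvarphi_diag z k
     + (if k < n then hweight m i (k + 1) * dvarphi_prev z (k + 1) else 0)"

lemma hfun_partial_deriv:
  assumes "odd n" "1 \<le> k" "k \<le> n"
  shows "((\<lambda>t. hfun m n i (z(k := t))) has_real_derivative dhfun m n i z k) (at (z k))"
proof -
  have "((\<lambda>t. \<Sum>j=1..n. hweight m i j * varphi (z(k := t)) j) has_real_derivative
      (\<Sum>j=1..n. hweight m i j *
         (if k = j then dvarphi_diag z j else if 2 \<le> j \<and> k = j - 1 then dvarphi_prev z j else 0)))
      (at (z k))"
    by (intro DERIV_sum DERIV_cmult varphi_partial_deriv) simp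
  also have "(\<Sum>j=1..n. hweight m i j *
         (if k = j then dvarphi_diag z j else if 2 \<le> j \<and> k = j - 1 then dvarphi_prev z j else 0))
      = (\<Sum>j=1..n. (if j = k then hweight m i k * dvarphi_diag z k else 0)
          + (if j = k + 1 then hweight m i (k + 1) * dvarphi_prev z (k + 1) else 0))"
    using assms(2) by (intro sum.cong) auto
  also have "\<dots> = dhfun m n i z k"
    using assms(2,3) by (simp add: sum.distrib dhfun_def)
  finally show ?thesis
    unfolding hfun_eq_weighted_sum[OF assms(1)] .
qed

lemma hfun_cong:
  assumes "odd n" "\<And>l. 1 \<le> l \<Longrightarrow> l \<le> n \<Longrightarrow> z l = z' l"
  shows "hfun m n i z = hfun m n i z'"
proof -
  have "varphi z j = varphi z' j" if "1 \<le> j" "j \<le> n" for j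
    using that assms(2) by (simp add: varphi_def)
  then show ?thesis
    by (simp add: hfun_eq_weighted_sum[OF assms(1)])
qed

lemma dvarphi_diag_diff_le:
  "\<bar>dvarphi_diag y j - dvarphi_diag y' j\<bar>
     \<le> (if j = 1 then 0 else 8 * \<bar>y (j - 1) - y' (j - 1)\<bar>) + 6 * \<bar>y j - y' j\<bar>"
proof -
  have prod: "\<bar>Psi a * dPhi b - Psi a' * dPhi b'\<bar> \<le> 4 * \<bar>a - a'\<bar> + 3 * \<bar>b - b'\<bar>" for a b a' b'
  proof -
    have "\<bar>Psi a * dPhi b - Psi a' * dPhi b'\<bar> \<le> 4 * \<bar>Psi a - Psi a'\<bar> + 1 * \<bar>dPhi b - dPhi b'\<bar>"
      using Psi_nonneg Psi_le_one dPhi_nonneg dPhi_le by (intro abs_mult_diff_le) auto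
    then show ?thesis
      using Psi_lipschitz[of a a'] dPhi_lipschitz[of b b'] by linarith
  qed
  show ?thesis
  proof (cases "j = 1")
    case True
    have "\<bar>Psi 1 * (dPhi (y 1) - dPhi (y' 1))\<bar> \<le> 1 * (3 * \<bar>y 1 - y' 1\<bar>)"
      unfolding abs_mult using Psi_nonneg Psi_le_one dPhi_lipschitz by (intro mult_mono) auto
    with True show ?thesis
      by (simp add: dvarphi_diag_def algebra_simps)
  next
    case False
    with prod[of "- y (j - 1)" "- y j" "- y' (j - 1)" "- y' j"] prod[of "y (j - 1)" "y j" "y' (j - 1)" "y' j"]
    show ?thesis
      by (simp add: dvarphi_diag_def abs_minus_commute) linarith
  qed
qed

lemma dvarphi_prev_diff_le:
  "\<bar>dvarphi_prev y j - dvarphi_prev y' j\<bar> \<le> 16 * pi * \<bar>y (j - 1) - y' (j - 1)\<bar> + 8 * \<bar>y j - y' j\<bar>"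
proof -
  have prod: "\<bar>dPsi a * Phi b - dPsi a' * Phi b'\<bar> \<le> 8 * pi * \<bar>a - a'\<bar> + 4 * \<bar>b - b'\<bar>" for a b a' b'
  proof -
    have "\<bar>dPsi a * Phi b - dPsi a' * Phi b'\<bar> \<le> 4 * pi * \<bar>dPsi a - dPsi a'\<bar> + 1 * \<bar>Phi b - Phi b'\<bar>"
      using dPsi_nonneg dPsi_le_one Phi_nonneg Phi_le by (intro abs_mult_diff_le) auto
    moreover have "4 * pi * \<bar>dPsi a - dPsi a'\<bar> \<le> 4 * pi * (2 * \<bar>a - a'\<bar>)"
      using dPsi_lipschitz by (intro mult_left_mono) auto
    ultimately show ?thesis
      using Phi_lipschitz[of b b'] by linarith
  qed
  from prod[of "- y (j - 1)" "- y j" "- y' (j - 1)" "- y' j"] prod[of "y (j - 1)" "y j" "y' (j - 1)" "y' j"]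
  show ?thesis
    by (simp add: dvarphi_prev_def abs_minus_commute) linarith
qed

lemma dhfun_diff_le:
  fixes y y' :: "nat \<Rightarrow> real"
  assumes "1 \<le> k" "k \<le> n"
  defines "e \<equiv> \<lambda>j. if j \<in> {1..n} then \<bar>y j - y' j\<bar> else 0"
  shows "\<bar>dhfun m n i y k - dhfun m n i y' k\<bar> \<le> 24 * e (k - 1) + (18 + 48 * pi) * e k + 24 * e (k + 1)"
proof -
  have diag: "\<bar>dvarphi_diag y k - dvarphi_diag y' k\<bar> \<le> 8 * e (k - 1) + 6 * e k"
    using dvarphi_diag_diff_le[of y k y'] assms by (auto simp: e_def split: if_splits)
  have diag_term: "\<bar>hweight m i k * (dvarphi_diag y k - dvarphi_diag y' k)\<bar> \<le> 3 * (8 * e (k - 1) + 6 * e k)"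
    unfolding abs_mult using diag hweight_nonneg hweight_le by (intro mult_mono) auto
  have prev_term: "\<bar>hweight m i (k + 1) * (dvarphi_prev y (k + 1) - dvarphi_prev y' (k + 1))\<bar>
      \<le> 3 * (16 * pi * e k + 8 * e (k + 1))" if "k < n"
    unfolding abs_mult using dvarphi_prev_diff_le[of y "k + 1" y'] that assms hweight_nonneg hweight_le
    by (intro mult_mono) (auto simp: e_def)
  have "0 \<le> pi * e k" "0 \<le> e (k + 1)"
    by (simp_all add: e_def)
  then show ?thesis
    using diag_term prev_term unfolding dhfun_def
    by (cases "k < n") (auto simp: algebra_simps abs_le_iff)
qed

lemma dhfun_lipschitz:
  "L2_set (\<lambda>k. dhfun m n i y k - dhfun m n i y' k) {1..n}
     \<le> (66 + 48 * pi) * L2_set (\<lambda>k. y k - y' k) {1..n}"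
proof -
  define e where "e = (\<lambda>j. if j \<in> {1..n} then \<bar>y j - y' j\<bar> else 0)"
  have e_nonneg: "0 \<le> e j" for j
    by (simp add: e_def)
  have "L2_set (\<lambda>k. dhfun m n i y k - dhfun m n i y' k) {1..n}
      = L2_set (\<lambda>k. \<bar>dhfun m n i y k - dhfun m n i y' k\<bar>) {1..n}"
    by (simp add: L2_set_def)
  also have "\<dots> \<le> L2_set (\<lambda>k. 24 * e (k - 1) + (18 + 48 * pi) * e k + 24 * e (k + 1)) {1..n}"
  proof (rule L2_set_mono)
    fix k assume "k \<in> {1..n}"
    then show "\<bar>dhfun m n i y k - dhfun m n i y' k\<bar> \<le> 24 * e (k - 1) + (18 + 48 * pi) * e k + 24 * e (k + 1)"
      unfolding e_def by (intro dhfun_diff_le) auto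
  qed simp
  also have "\<dots> \<le> L2_set (\<lambda>k. 24 * e (k - 1)) {1..n} + L2_set (\<lambda>k. (18 + 48 * pi) * e k) {1..n}
      + L2_set (\<lambda>k. 24 * e (k + 1)) {1..n}"
    by (intro order_trans[OF L2_set_triangle_ineq] add_right_mono L2_set_triangle_ineq)
  also have "\<dots> = 24 * L2_set (\<lambda>k. e (k - 1)) {1..n} + (18 + 48 * pi) * L2_set e {1..n}
      + 24 * L2_set (\<lambda>k. e (k + 1)) {1..n}"
    by (simp flip: L2_set_right_distrib)
  also have "\<dots> \<le> 24 * L2_set e {1..n} + (18 + 48 * pi) * L2_set e {1..n} + 24 * L2_set e {1..n}"
    by (intro add_mono mult_left_mono order_refl L2_set_shift_down_le L2_set_shift_up_le)
       (simp_all add: e_def)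
  also have "L2_set e {1..n} = L2_set (\<lambda>k. y k - y' k) {1..n}"
    by (simp add: L2_set_def e_def)
  finally show ?thesis
    by (simp add: algebra_simps)
qed

lemma ffun_partial_deriv:
  fixes eps Lf :: real and m :: nat
  assumes "odd n" "1 \<le> k" "k \<le> n"
  defines "s \<equiv> sqrt (real m) * Lf / (150 * pi * eps)"
  shows "((\<lambda>t. ffun eps Lf m n i (z(k := t))) has_real_derivative
           300 * pi * eps\<^sup>2 / (real m * Lf) * (dhfun m n i (\<lambda>j. s * z j) k * s)) (at (z k))"
proof -
  have ffun_eq: "ffun eps Lf m n i w = 300 * pi * eps\<^sup>2 / (real m * Lf) * hfun m n i (\<lambda>j. s * w j)" for w
    by (simp add: ffun_def s_def)
  have scaled: "(\<lambda>j. s * (z(k := t)) j) = (\<lambda>j. s * z j)(k := s * t)" for t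
    by auto
  have "((\<lambda>t'. hfun m n i ((\<lambda>j. s * z j)(k := t'))) has_real_derivative dhfun m n i (\<lambda>j. s * z j) k)
      (at (s * z k))"
    using hfun_partial_deriv[OF assms(1-3), of m i "\<lambda>j. s * z j"] by simp
  moreover have "((\<lambda>t. s * t) has_real_derivative s) (at (z k))"
    by (auto intro!: derivative_eq_intros)
  ultimately have "((\<lambda>t. hfun m n i ((\<lambda>j. s * z j)(k := s * t))) has_real_derivative
      dhfun m n i (\<lambda>j. s * z j) k * s) (at (z k))"
    by (rule DERIV_chain2)
  then show ?thesis
    unfolding ffun_eq scaled by (rule DERIV_cmult)
qed

lemma grad_ffun:
  fixes eps Lf :: real and m :: nat
  assumes "odd n" "1 \<le> k" "k \<le> n"
  defines "s \<equiv> sqrt (real m) * Lf / (150 * pi * eps)"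
  shows "grad n (ffun eps Lf m n i) z k
           = 300 * pi * eps\<^sup>2 / (real m * Lf) * (dhfun m n i (\<lambda>j. s * z j) k * s)"
  using assms ffun_partial_deriv[OF assms(1-3)] by (simp add: grad_def DERIV_imp_deriv)

lemma ffun_has_partial_derivative_grad:
  assumes "odd n" "1 \<le> k" "k \<le> n"
  shows "((\<lambda>t. ffun eps Lf m n i (z(k := t))) has_real_derivative grad n (ffun eps Lf m n i) z k) (at (z k))"
  using ffun_partial_deriv[OF assms] grad_ffun[OF assms] by simp

lemma grad_ffun_lipschitz:
  assumes "odd n" "0 < eps" "0 < Lf" "0 < m"
  shows "L2_set (\<lambda>k. grad n (ffun eps Lf m n i) y k - grad n (ffun eps Lf m n i) y' k) {1..n}
           \<le> Lf * L2_set (\<lambda>k. y k - y' k) {1..n}"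
proof -
  define s where "s = sqrt (real m) * Lf / (150 * pi * eps)"
  define c where "c = 300 * pi * eps\<^sup>2 / (real m * Lf)"
  have s_nonneg: "0 \<le> s" and c_nonneg: "0 \<le> c"
    using assms by (simp_all add: s_def c_def)
  \<comment> \<open>this is what the scaling in ffun is chosen for: as 66 + 48 pi \<le> 75 pi,
    the Lipschitz constant becomes at most Lf\<close>
  have cs: "c * s * s = Lf / (75 * pi)"
    using assms by (simp add: c_def s_def power2_eq_square field_simps)
  have "L2_set (\<lambda>k. grad n (ffun eps Lf m n i) y k - grad n (ffun eps Lf m n i) y' k) {1..n}
      = L2_set (\<lambda>k. c * s * (dhfun m n i (\<lambda>j. s * y j) k - dhfun m n i (\<lambda>j. s * y' j) k)) {1..n}"
    using assms(1) by (intro L2_set_cong) (simp_all add: grad_ffun c_def s_def algebra_simps)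
  also have "\<dots> = c * s *
      L2_set (\<lambda>k. dhfun m n i (\<lambda>j. s * y j) k - dhfun m n i (\<lambda>j. s * y' j) k) {1..n}"
    using s_nonneg c_nonneg by (simp add: L2_set_right_distrib)
  also have "\<dots> \<le> c * s * ((66 + 48 * pi) * L2_set (\<lambda>k. s * y k - s * y' k) {1..n})"
    using s_nonneg c_nonneg by (intro mult_left_mono dhfun_lipschitz) simp
  also have "L2_set (\<lambda>k. s * y k - s * y' k) {1..n} = s * L2_set (\<lambda>k. y k - y' k) {1..n}"
    using s_nonneg by (simp add: L2_set_right_distrib right_diff_distrib)
  also have "c * s * ((66 + 48 * pi) * (s * L2_set (\<lambda>k. y k - y' k) {1..n}))
      = c * s * s * (66 + 48 * pi) * L2_set (\<lambda>k. y k - y' k) {1..n}"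
    by (simp add: algebra_simps)
  also have "\<dots> = Lf * ((66 + 48 * pi) / (75 * pi)) * L2_set (\<lambda>k. y k - y' k) {1..n}"
    unfolding cs by simp
  also have "\<dots> \<le> Lf * L2_set (\<lambda>k. y k - y' k) {1..n}"
    using assms pi_gt3 by (intro mult_right_mono) (simp_all add: field_simps)
  finally show ?thesis .
qed

lemma ffun_cong:
  assumes "odd n" "\<And>l. 1 \<le> l \<Longrightarrow> l \<le> n \<Longrightarrow> z l = z' l"
  shows "ffun eps Lf m n i z = ffun eps Lf m n i z'"
  using hfun_cong[OF assms(1), of "\<lambda>j. sqrt (real m) * Lf * z j / (150 * pi * eps)"] assms(2)
  by (simp add: ffun_def)

section \<open>Block structure of f_0 and H\<close>

lemma block_index_div_mod:
  fixes p q n :: nat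
  assumes "1 \<le> q" "q \<le> n"
  shows "((p - 1) * n + q - 1) div n = p - 1" "((p - 1) * n + q - 1) mod n = q - 1"
proof -
  obtain r where r: "q = Suc r" "r < n"
    using assms by (cases q) auto
  then have "(p - 1) * n + q - 1 = r + n * (p - 1)"
    by (simp add: mult.commute)
  with r show "((p - 1) * n + q - 1) div n = p - 1" "((p - 1) * n + q - 1) mod n = q - 1"
    by simp_all
qed

lemma block_index_eq_iff:
  fixes p p' q q' n :: nat
  assumes "1 \<le> p" "1 \<le> p'" "1 \<le> q" "q \<le> n" "1 \<le> q'" "q' \<le> n"
  shows "(p - 1) * n + q = (p' - 1) * n + q' \<longleftrightarrow> p = p' \<and> q = q'"
proof
  assume eq: "(p - 1) * n + q = (p' - 1) * n + q'"
  then have "((p - 1) * n + q - 1) div n = ((p' - 1) * n + q' - 1) div n"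
    "((p - 1) * n + q - 1) mod n = ((p' - 1) * n + q' - 1) mod n"
    by simp_all
  with assms have "p - 1 = p' - 1" "q - 1 = q' - 1"
    by (simp_all only: block_index_div_mod)
  with assms show "p = p' \<and> q = q'"
    by linarith
qed simp

lemma Jmat_sum:
  assumes "1 \<le> p" "p < m"
  shows "(\<Sum>i=1..m. Jmat m p i * f i) = f (p + 1) - f p"
proof -
  have "(\<Sum>i=1..m. Jmat m p i * f i)
      = (\<Sum>i=1..m. (if i = p + 1 then f (p + 1) else 0) + (if i = p then - f p else 0))"
    using assms by (intro sum.cong) (auto simp: Jmat_def)
  also have "\<dots> = f (p + 1) - f p"
    using assms by (simp add: sum.distrib)
  finally show ?thesis .
qed

lemma Hmat_block_entry:
  assumes "1 \<le> p" "1 \<le> q" "q \<le> n" "1 \<le> i" "1 \<le> k" "k \<le> n"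
  shows "Hmat m L n ((p - 1) * n + q) ((i - 1) * n + k) = real m * L * Jmat m p i * (if q = k then 1 else 0)"
proof -
  have "((p - 1) * n + q - 1) mod n = ((i - 1) * n + k - 1) mod n \<longleftrightarrow> q = k"
    using block_index_div_mod(2)[of q n p] block_index_div_mod(2)[of k n i] assms by auto
  with assms show ?thesis
    using block_index_div_mod(1)[of q n p] block_index_div_mod(1)[of k n i] by (simp add: Hmat_def kron_id_def)
qed

lemma matvec_Hmat_block:
  assumes "1 \<le> p" "p < m" "1 \<le> q" "q \<le> n"
  shows "matvec (Hmat m L n) (m * n) x ((p - 1) * n + q) = real m * L * (blk n x (p + 1) q - blk n x p q)"
proof -
  have row: "(\<Sum>k=1..n. Hmat m L n ((p - 1) * n + q) ((i - 1) * n + k) * x ((i - 1) * n + k))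
      = real m * L * (Jmat m p i * blk n x i q)" if "i \<in> {1..m}" for i
  proof -
    have "(\<Sum>k=1..n. Hmat m L n ((p - 1) * n + q) ((i - 1) * n + k) * x ((i - 1) * n + k))
        = (\<Sum>k=1..n. if k = q then real m * L * (Jmat m p i * blk n x i q) else 0)"
    proof (intro sum.cong refl)
      fix k assume "k \<in> {1..n}"
      then show "Hmat m L n ((p - 1) * n + q) ((i - 1) * n + k) * x ((i - 1) * n + k)
          = (if k = q then real m * L * (Jmat m p i * blk n x i q) else 0)"
        using Hmat_block_entry[of p q n i k m L] that assms by (auto simp: blk_def)
    qed
    then show ?thesis
      using assms by simp
  qed
  have "matvec (Hmat m L n) (m * n) x ((p - 1) * n + q)
      = (\<Sum>i=1..m. \<Sum>k=1..n. Hmat m L n ((p - 1) * n + q) ((i - 1) * n + k) * x ((i - 1) * n + k))"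
    unfolding matvec_def by (rule sum_blocks)
  also have "\<dots> = (\<Sum>i=1..m. real m * L * (Jmat m p i * blk n x i q))"
    using row by (rule sum.cong[OF refl])
  also have "\<dots> = real m * L * (blk n x (p + 1) q - blk n x p q)"
    using Jmat_sum[OF assms(1,2), of "\<lambda>i. blk n x i q"] by (simp flip: sum_distrib_left)
  finally show ?thesis .
qed

lemma sum_blocks_matTvec_Hmat:
  assumes "1 \<le> k" "k \<le> n"
  shows "(\<Sum>i=1..m. matTvec (Hmat m L n) ((m - 1) * n) \<gamma> ((i - 1) * n + k)) = 0"
proof -
  have col: "(\<Sum>i=1..m. Hmat m L n ((p - 1) * n + q) ((i - 1) * n + k)) = 0"
    if "p \<in> {1..m - 1}" "q \<in> {1..n}" for p q
  proof -
    have "(\<Sum>i=1..m. Hmat m L n ((p - 1) * n + q) ((i - 1) * n + k))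
        = (\<Sum>i=1..m. Jmat m p i * (real m * L * (if q = k then 1 else 0)))"
      using Hmat_block_entry[of p q n _ k m L] that assms by (intro sum.cong) auto
    also have "\<dots> = 0"
      using that by (subst Jmat_sum) auto
    finally show ?thesis .
  qed
  have "(\<Sum>i=1..m. matTvec (Hmat m L n) ((m - 1) * n) \<gamma> ((i - 1) * n + k))
      = (\<Sum>r=1..(m - 1) * n. \<gamma> r * (\<Sum>i=1..m. Hmat m L n r ((i - 1) * n + k)))"
    unfolding matTvec_def by (subst sum.swap) (simp add: sum_distrib_left mult.commute)
  also have "\<dots> = (\<Sum>p=1..m - 1. \<Sum>q=1..n.
      \<gamma> ((p - 1) * n + q) * (\<Sum>i=1..m. Hmat m L n ((p - 1) * n + q) ((i - 1) * n + k)))"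
    by (rule sum_blocks)
  also have "\<dots> = 0"
    by (intro sum.neutral ballI mult_eq_0_iff[THEN iffD2] disjI2 col)
  finally show ?thesis .
qed

lemma enorm_matvec_Hmat:
  assumes "0 \<le> L"
  shows "enorm ((m - 1) * n) (matvec (Hmat m L n) (m * n) x)
           = real m * L * L2_set (\<lambda>p. L2_set (\<lambda>k. blk n x (p + 1) k - blk n x p k) {1..n}) {1..m - 1}"
proof -
  have "(\<Sum>r=1..(m - 1) * n. (matvec (Hmat m L n) (m * n) x r)\<^sup>2)
      = (\<Sum>p=1..m - 1. \<Sum>q=1..n. (matvec (Hmat m L n) (m * n) x ((p - 1) * n + q))\<^sup>2)"
    by (rule sum_blocks)
  also have "\<dots> = (\<Sum>p=1..m - 1. \<Sum>q=1..n. (real m * L)\<^sup>2 * (blk n x (p + 1) q - blk n x p q)\<^sup>2)"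
  proof (intro sum.cong refl)
    fix p q assume "p \<in> {1..m - 1}" "q \<in> {1..n}"
    then have "1 \<le> p" "p < m" "1 \<le> q" "q \<le> n"
      by auto
    then show "(matvec (Hmat m L n) (m * n) x ((p - 1) * n + q))\<^sup>2
        = (real m * L)\<^sup>2 * (blk n x (p + 1) q - blk n x p q)\<^sup>2"
      by (simp only: matvec_Hmat_block power_mult_distrib)
  qed
  also have "\<dots> = (real m * L)\<^sup>2 *
      (\<Sum>p=1..m - 1. (L2_set (\<lambda>k. blk n x (p + 1) k - blk n x p k) {1..n})\<^sup>2)"
    by (simp add: L2_set_def sum_nonneg sum_distrib_left)
  finally show ?thesis
    using assms by (simp add: enorm_def L2_set_def real_sqrt_mult)
qed

lemma grad_f0_block:
  assumes "odd n" "1 \<le> i" "i \<le> m" "1 \<le> k" "k \<le> n"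
  shows "grad (m * n) (f0 eps Lf m n) x ((i - 1) * n + k) = grad n (ffun eps Lf m n i) (blk n x i) k"
proof -
  define c where "c = (i - 1) * n + k"
  have "c \<le> i * n"
    using assms by (cases i) (simp_all add: c_def)
  also have "\<dots> \<le> m * n"
    using assms by simp
  finally have c_range: "1 \<le> c" "c \<le> m * n"
    using assms by (simp_all add: c_def)
  have own_block: "blk n (x(c := t)) i = (blk n x i)(k := t)" for t
    by (auto simp: blk_def c_def)
  \<comment> \<open>the other blocks only change at indices outside 1..n (e.g. blk n _ (i + 1) 0),
    which ffun ignores\<close>
  have other_blocks: "ffun eps Lf m n i' (blk n (x(c := t)) i') = ffun eps Lf m n i' (blk n x i')"
    if "i' \<in> {1..m} - {i}" for t i'
    using assms(1)
  proof (rule ffun_cong)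
    fix l assume "1 \<le> l" "l \<le> n"
    then show "blk n (x(c := t)) i' l = blk n x i' l"
      using block_index_eq_iff[of i' i l n k] that assms by (auto simp: blk_def c_def)
  qed
  have f0_upd: "f0 eps Lf m n (x(c := t))
      = ffun eps Lf m n i ((blk n x i)(k := t)) + (\<Sum>i'\<in>{1..m} - {i}. ffun eps Lf m n i' (blk n x i'))" for t
  proof -
    have "f0 eps Lf m n (x(c := t)) = ffun eps Lf m n i (blk n (x(c := t)) i)
        + (\<Sum>i'\<in>{1..m} - {i}. ffun eps Lf m n i' (blk n (x(c := t)) i'))"
      unfolding f0_def using assms by (intro sum.remove) auto
    moreover have "(\<Sum>i'\<in>{1..m} - {i}. ffun eps Lf m n i' (blk n (x(c := t)) i'))
        = (\<Sum>i'\<in>{1..m} - {i}. ffun eps Lf m n i' (blk n x i'))"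
      by (rule sum.cong[OF refl other_blocks])
    ultimately show ?thesis
      by (simp only: own_block)
  qed
  have "((\<lambda>t. ffun eps Lf m n i ((blk n x i)(k := t))
              + (\<Sum>i'\<in>{1..m} - {i}. ffun eps Lf m n i' (blk n x i')))
      has_real_derivative grad n (ffun eps Lf m n i) (blk n x i) k + 0) (at (blk n x i k))"
    by (intro DERIV_add ffun_has_partial_derivative_grad DERIV_const assms)
  moreover have "x c = blk n x i k"
    by (simp add: blk_def c_def)
  ultimately have "((\<lambda>t. f0 eps Lf m n (x(c := t))) has_real_derivative grad n (ffun eps Lf m n i) (blk n x i) k)
      (at (x c))"
    by (simp add: f0_upd)
  moreover have "grad (m * n) (f0 eps Lf m n) x c = deriv (\<lambda>t. f0 eps Lf m n (x(c := t))) (x c)"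
    using c_range by (simp add: grad_def)
  ultimately show ?thesis
    by (simp add: DERIV_imp_deriv c_def)
qed

lemma Inf_norm_stationarity_ge:
  assumes "odd n" "0 < m"
  shows "sqrt (real m) * L2_set (\<lambda>k. (1 / real m) * (\<Sum>i=1..m. grad n (ffun eps Lf m n i) (blk n x i) k)) {1..n}
           \<le> Inf {enorm (m * n) (\<lambda>c. grad (m * n) (f0 eps Lf m n) x c
                                   + matTvec (Hmat m Lf n) ((m - 1) * n) \<gamma> c) | \<gamma>. True}"
proof (rule cInf_greatest)
  fix e assume "e \<in> {enorm (m * n) (\<lambda>c. grad (m * n) (f0 eps Lf m n) x c
                                   + matTvec (Hmat m Lf n) ((m - 1) * n) \<gamma> c) | \<gamma>. True}"
  then obtain \<gamma> where "e = enorm (m * n) (\<lambda>c. grad (m * n) (f0 eps Lf m n) x c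
                                   + matTvec (Hmat m Lf n) ((m - 1) * n) \<gamma> c)"
    by blast
  moreover define w where "w c = grad (m * n) (f0 eps Lf m n) x c + matTvec (Hmat m Lf n) ((m - 1) * n) \<gamma> c" for c
  ultimately have e: "e = L2_set w {1..m * n}"
    by (simp add: enorm_eq_L2_set w_def[abs_def])
  have "(\<Sum>i=1..m. w ((i - 1) * n + k)) = (\<Sum>i=1..m. grad n (ffun eps Lf m n i) (blk n x i) k)"
    if "k \<in> {1..n}" for k
  proof -
    have "(\<Sum>i=1..m. matTvec (Hmat m Lf n) ((m - 1) * n) \<gamma> ((i - 1) * n + k)) = 0"
      using that by (intro sum_blocks_matTvec_Hmat) auto
    moreover have "(\<Sum>i=1..m. grad (m * n) (f0 eps Lf m n) x ((i - 1) * n + k))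
        = (\<Sum>i=1..m. grad n (ffun eps Lf m n i) (blk n x i) k)"
      using that assms(1) by (intro sum.cong refl grad_f0_block) auto
    ultimately show ?thesis
      by (simp only: w_def sum.distrib add_0_right)
  qed
  then have "L2_set (\<lambda>k. (1 / real m) * (\<Sum>i=1..m. grad n (ffun eps Lf m n i) (blk n x i) k)) {1..n}
      = L2_set (\<lambda>k. (1 / real m) * (\<Sum>i=1..m. w ((i - 1) * n + k))) {1..n}"
    by (intro L2_set_cong) simp_all
  with sqrt_mult_L2_set_block_mean_le[of m w n]
  show "sqrt (real m) *
      L2_set (\<lambda>k. (1 / real m) * (\<Sum>i=1..m. grad n (ffun eps Lf m n i) (blk n x i) k)) {1..n} \<le> e"
    unfolding e by simp
qed auto

lemma L2_set_mean_grad_ffun_xbar_le: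
  assumes "odd n" "0 < eps" "0 < Lf" "0 < m"
  shows "L2_set (\<lambda>k. (1 / real m) * (\<Sum>i=1..m. grad n (ffun eps Lf m n i) (xbar m n x) k)) {1..n}
           \<le> L2_set (\<lambda>k. (1 / real m) * (\<Sum>i=1..m. grad n (ffun eps Lf m n i) (blk n x i) k)) {1..n}
             + Lf * (\<Sum>p=1..m - 1. L2_set (\<lambda>k. blk n x (p + 1) k - blk n x p k) {1..n})"
proof (rule L2_set_mean_lipschitz_le)
  fix i assume "i \<in> {1..m}"
  then show "L2_set (\<lambda>k. xbar m n x k - blk n x i k) {1..n}
      \<le> (\<Sum>p=1..m - 1. L2_set (\<lambda>k. blk n x (p + 1) k - blk n x p k) {1..n})"
    using L2_set_mean_sub_le[of i m "blk n x" "{1..n}"] by (simp add: xbar_def)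
next
  fix i
  show "L2_set (\<lambda>k. grad n (ffun eps Lf m n i) (xbar m n x) k - grad n (ffun eps Lf m n i) (blk n x i) k) {1..n}
      \<le> Lf * L2_set (\<lambda>k. xbar m n x k - blk n x i k) {1..n}"
    using assms by (intro grad_ffun_lipschitz) simp_all
qed (use assms in simp_all)

theorem lemma6:
  fixes eps Lf :: real and m1 m2 m dbar d :: nat and x :: "nat \<Rightarrow> real"
  assumes "0 < eps" "eps < 1" "0 < Lf"
    and "m1 \<ge> 2" "m2 \<ge> 1" "even (m1 * m2)" "m = 3 * m1 * m2"
    and "odd dbar" "dbar \<ge> 5" "d = m * dbar"
  shows "max (enorm ((m - 1) * dbar) (matvec (Hmat m Lf dbar) d x))
             (Inf {enorm d (\<lambda>c. grad d (f0 eps Lf m dbar) x c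
                                   + matTvec (Hmat m Lf dbar) ((m - 1) * dbar) \<gamma> c) | \<gamma>. True})
         \<ge> sqrt (real m) / 2 *
           enorm dbar (\<lambda>j. (1 / real m) *
              (\<Sum>i=1..m. grad dbar (ffun eps Lf m dbar i) (xbar m dbar x) j))"
proof -
  have m_pos: "0 < m"
    using assms by simp
  define gap where "gap p = L2_set (\<lambda>k. blk dbar x (p + 1) k - blk dbar x p k) {1..dbar}" for p
  define B where "B = L2_set (\<lambda>k. (1 / real m) *
      (\<Sum>i=1..m. grad dbar (ffun eps Lf m dbar i) (blk dbar x i) k)) {1..dbar}"
  have consensus: "enorm ((m - 1) * dbar) (matvec (Hmat m Lf dbar) d x) = real m * Lf * L2_set gap {1..m - 1}"
    using enorm_matvec_Hmat[of Lf m dbar x] assms(3,10) by (simp add: gap_def[abs_def])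
  have stationarity: "sqrt (real m) * B \<le> Inf {enorm d (\<lambda>c. grad d (f0 eps Lf m dbar) x c
                                   + matTvec (Hmat m Lf dbar) ((m - 1) * dbar) \<gamma> c) | \<gamma>. True}"
    using Inf_norm_stationarity_ge[OF \<open>odd dbar\<close> m_pos, of eps Lf x] assms(10) by (simp add: B_def)
  have mean: "enorm dbar (\<lambda>j. (1 / real m) * (\<Sum>i=1..m. grad dbar (ffun eps Lf m dbar i) (xbar m dbar x) j))
      \<le> B + Lf * sum gap {1..m - 1}"
    using L2_set_mean_grad_ffun_xbar_le[OF \<open>odd dbar\<close> assms(1,3) m_pos, of x]
    by (simp add: enorm_eq_L2_set B_def gap_def)
  have "sqrt (real m) * (Lf * sum gap {1..m - 1}) \<le> real m * Lf * L2_set gap {1..m - 1}"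
    using mult_left_mono[OF sqrt_mult_sum_le_L2_set[of m gap], of Lf] assms(3) by (simp add: ac_simps)
  then have "sqrt (real m) * enorm dbar (\<lambda>j. (1 / real m) *
      (\<Sum>i=1..m. grad dbar (ffun eps Lf m dbar i) (xbar m dbar x) j))
      \<le> sqrt (real m) * B + enorm ((m - 1) * dbar) (matvec (Hmat m Lf dbar) d x)"
    using mult_left_mono[OF mean, of "sqrt (real m)"] consensus by (simp add: distrib_left)
  with stationarity show ?thesis
    by simp
qed

end
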